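(* Let $\{\tilde\alpha,\tilde\beta\}$ be a dual timelike - spacelike Mannheim pair in $ID_1^3$, with $\tilde\beta(s^* )=\tilde\alpha(s)+\lambda B(s)$ where $\lambda$ is a nonzero dual constant. If $\tau$ is the dual torsion of $\tilde\alpha$ and $P$, $Q$ are the dual curvature and dual torsion of $\tilde\beta$, then $$\tau=-\frac{P}{\lambda Q}.$$
   Context: Dual numbers: $ID=\{a+\varepsilon a^*: a,a^*\in\mathbb R\}$ with $\varepsilon^2=0$; differentiable functions extend by $f(a+\varepsilon a^* )=f(a)+\varepsilon a^* f'(a)$. $ID_1^3$ is $ID^3$ with dual Lorentzian inner product $\langle \vec A,\vec B\rangle=\langle\vec a,\vec b\rangle+\varepsilon(\langle\vec a,\vec b^*\rangle+\langle\vec a^*,\vec b\rangle)$, $\langle\vec a,\vec b\rangle=-a_1b_1+a_2b_2+a_3b_3$; dual spacelike/timelike vectors have $\langle A,A\rangle>0$ / $<0$. $\tilde\alpha$ is a dual timelike curve with dual arc length $s$ and Frenet frame $\{T,N,B\}$ ($T$ timelike, $N,B$ spacelike unit, mutually orthogonal): $T'=\kappa N$, $N'=\kappa T+\tau B$, $B'=-\tau N$. $\tilde\beta$ is a dual spacelike curve with dual timelike binormal, arc length $s^*$, frame $\{V_1,V_2,V_3\}$ ($V_1,V_2$ spacelike unit, $V_3$ timelike unit): $V_1'=PV_2$, $V_2'=-PV_1+QV_3$, $V_3'=QV_2$. A dual timelike - spacelike Mannheim pair means that under a correspondence $s\mapsto s^*$ the dual binormal line of $\tilde\alpha$ coincides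 with the dual principal normal line of $\tilde\beta$ at corresponding points. *)

theory Defs
  imports "HOL-Analysis.Analysis"
begin

datatype dual = Dual (dre: real) (ddu: real)

instantiation dual :: comm_ring_1
begin
definition "0 = Dual 0 0"
definition "1 = Dual 1 0"
definition "x + y = Dual (dre x + dre y) (ddu x + ddu y)"
definition "x - y = Dual (dre x - dre y) (ddu x - ddu y)"
definition "- x = Dual (- dre x) (- ddu x)"
definition "x * y = Dual (dre x * dre y) (dre x * ddu y + ddu x * dre y)"
instance
  by standard (auto simp: zero_dual_def one_dual_def plus_dual_def minus_dual_def
      uminus_dual_def times_dual_def algebra_simps intro: dual.expand)
end

text \<open>Division of dual numbers (meaningful when the real part of the divisor is nonzero):
  1/(a + eps a*) = 1/a - eps a*/a^2.\<close>
instantiation dual :: inverse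
begin
definition "inverse x = Dual (1 / dre x) (- ddu x / (dre x)\<^sup>2)"
definition "divide x y = x * inverse (y::dual)"
instance ..
end

text \<open>Extension of a differentiable real function: f(a + eps a*) = f(a) + eps a* f'(a).
  Dual square root.\<close>
definition dsqrt :: "dual \<Rightarrow> dual" where
  "dsqrt x = Dual (sqrt (dre x)) (ddu x * (1 / (2 * sqrt (dre x))))"

type_synonym dvec = "dual ^ 3"

definition vre :: "dvec \<Rightarrow> real ^ 3" where "vre A = (\<chi> i. dre (A $ i))"
definition vdu :: "dvec \<Rightarrow> real ^ 3" where "vdu A = (\<chi> i. ddu (A $ i))"

definition lor :: "real ^ 3 \<Rightarrow> real ^ 3 \<Rightarrow> real" where
  "lor a b = - a$1 * b$1 + a$2 * b$2 + a$3 * b$3"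

definition dinner :: "dvec \<Rightarrow> dvec \<Rightarrow> dual" where
  "dinner A B = Dual (lor (vre A) (vre B)) (lor (vre A) (vdu B) + lor (vdu A) (vre B))"

definition dspacelike :: "dvec \<Rightarrow> bool" where "dspacelike A \<longleftrightarrow> dre (dinner A A) > 0"
definition dtimelike :: "dvec \<Rightarrow> bool" where "dtimelike A \<longleftrightarrow> dre (dinner A A) < 0"

definition dnorm_s :: "dvec \<Rightarrow> dual" where "dnorm_s A = dsqrt (dinner A A)"
definition dnorm_t :: "dvec \<Rightarrow> dual" where "dnorm_t A = dsqrt (- dinner A A)"

definition ddet :: "dvec \<Rightarrow> dvec \<Rightarrow> dvec \<Rightarrow> dual" where
  "ddet A B C = A$1 * (B$2 * C$3 - B$3 * C$2) - A$2 * (B$1 * C$3 - B$3 * C$1)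
               + A$3 * (B$1 * C$2 - B$2 * C$1)"

definition dual_deriv :: "(real \<Rightarrow> dual) \<Rightarrow> dual \<Rightarrow> real \<Rightarrow> bool" where
  "dual_deriv f f' t \<longleftrightarrow> ((\<lambda>u. dre (f u)) has_real_derivative dre f') (at t) \<and>
                         ((\<lambda>u. ddu (f u)) has_real_derivative ddu f') (at t)"

definition dvec_deriv :: "(real \<Rightarrow> dvec) \<Rightarrow> dvec \<Rightarrow> real \<Rightarrow> bool" where
  "dvec_deriv X X' t \<longleftrightarrow> ((\<lambda>u. vre (X u)) has_vector_derivative vre X') (at t) \<and>
                         ((\<lambda>u. vdu (X u)) has_vector_derivative vdu X') (at t)"

text \<open>Derivatives with respect to
  the dual arc length are d/ds = (1/(ds/dt)) d/dt; the Frenet equations are written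
  multiplied by ds/dt.\<close>
definition dual_timelike_frenet ::
  "real set \<Rightarrow> (real \<Rightarrow> dvec) \<Rightarrow> (real \<Rightarrow> dual) \<Rightarrow> (real \<Rightarrow> dvec) \<Rightarrow> (real \<Rightarrow> dvec)
   \<Rightarrow> (real \<Rightarrow> dvec) \<Rightarrow> (real \<Rightarrow> dual) \<Rightarrow> (real \<Rightarrow> dual) \<Rightarrow> bool" where
  "dual_timelike_frenet I \<alpha> s T N B \<kappa> \<tau> \<longleftrightarrow>
     (\<forall>t\<in>I. \<exists>\<alpha>' s'.
        dvec_deriv \<alpha> \<alpha>' t \<and> dtimelike \<alpha>' \<and> dual_deriv s s' t \<and> s' = dnorm_t \<alpha>' \<and>
        T t = inverse s' *s \<alpha>' \<and>
        dinner (T t) (T t) = -1 \<and> dinner (N t) (N t) = 1 \<and> dinner (B t) (B t) = 1 \<and>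
        dinner (T t) (N t) = 0 \<and> dinner (T t) (B t) = 0 \<and> dinner (N t) (B t) = 0 \<and>
        dvec_deriv T ((s' * \<kappa> t) *s N t) t \<and>
        dvec_deriv N ((s' * \<kappa> t) *s T t + (s' * \<tau> t) *s B t) t \<and>
        dvec_deriv B (- ((s' * \<tau> t) *s N t)) t)"

definition dual_spacelike_frenet ::
  "real set \<Rightarrow> (real \<Rightarrow> dvec) \<Rightarrow> (real \<Rightarrow> dual) \<Rightarrow> (real \<Rightarrow> dvec) \<Rightarrow> (real \<Rightarrow> dvec)
   \<Rightarrow> (real \<Rightarrow> dvec) \<Rightarrow> (real \<Rightarrow> dual) \<Rightarrow> (real \<Rightarrow> dual) \<Rightarrow> bool" where
  "dual_spacelike_frenet I \<beta> s V1 V2 V3 P Q \<longleftrightarrow>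
     (\<forall>t\<in>I. \<exists>\<beta>' s'.
        dvec_deriv \<beta> \<beta>' t \<and> dspacelike \<beta>' \<and> dual_deriv s s' t \<and> s' = dnorm_s \<beta>' \<and>
        V1 t = inverse s' *s \<beta>' \<and>
        dinner (V1 t) (V1 t) = 1 \<and> dinner (V2 t) (V2 t) = 1 \<and> dinner (V3 t) (V3 t) = -1 \<and>
        dinner (V1 t) (V2 t) = 0 \<and> dinner (V1 t) (V3 t) = 0 \<and> dinner (V2 t) (V3 t) = 0 \<and>
        dvec_deriv V1 ((s' * P t) *s V2 t) t \<and>
        dvec_deriv V2 (- ((s' * P t) *s V1 t) + (s' * Q t) *s V3 t) t \<and>
        dvec_deriv V3 ((s' * Q t) *s V2 t) t)"

end

theory Submission imports Defs begin

text \<open>Differentiating \<open>\<beta> = \<alpha> + \<lambda> B\<close> gives \<open>s\<^sub>2' V\<^sub>1 = s' (T - \<lambda>\<tau> N)\<close>, so \<open>V\<^sub>1\<close> lies in the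
  plane of \<open>T\<close> and \<open>N\<close>; writing \<open>V\<^sub>1 = a (T - c N)\<close> with \<open>c = \<lambda>\<tau>\<close>, the conditions that
  \<open>(V\<^sub>3, V\<^sub>1, B)\<close> be an orthonormal frame of the same orientation as \<open>(T, N, B)\<close> force
  \<open>\<langle>V\<^sub>3, N\<rangle> = a\<close>.  Differentiating \<open>V\<^sub>2 = B\<close> and pairing the result with \<open>V\<^sub>1\<close> and \<open>V\<^sub>3\<close>
  gives \<open>s\<^sub>2' P = - s' \<tau> a c\<close> and \<open>s\<^sub>2' Q = s' \<tau> a\<close>, whence \<open>P = -\<lambda>\<tau>Q\<close>.\<close>

lemma dual_components [simp]:
  "dre (x + y) = dre x + dre y" "ddu (x + y) = ddu x + ddu y"
  "dre (x - y) = dre x - dre y" "ddu (x - y) = ddu x - ddu y"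
  "dre (- x) = - dre x" "ddu (- x) = - ddu x"
  "dre (x * y) = dre x * dre y" "ddu (x * y) = dre x * ddu y + ddu x * dre y"
  "dre 0 = 0" "ddu 0 = 0" "dre 1 = 1" "ddu 1 = 0"
  by (simp_all add: plus_dual_def minus_dual_def uminus_dual_def times_dual_def
      zero_dual_def one_dual_def)

lemma dual_eqI: "dre x = dre y \<Longrightarrow> ddu x = ddu y \<Longrightarrow> x = y"
  by (cases x; cases y) auto

lemma dual_right_inverse: "dre x \<noteq> 0 \<Longrightarrow> x * inverse x = 1"
  by (rule dual_eqI) (simp_all add: inverse_dual_def field_simps power2_eq_square)

lemma dual_mult_left_cancel: "dre x \<noteq> 0 \<Longrightarrow> x * y = x * z \<Longrightarrow> y = z"
  by (metis dual_right_inverse mult.assoc mult.commute mult_1_left)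

lemma dual_eq_minus_divideI: "dre y \<noteq> 0 \<Longrightarrow> x = - y * w \<Longrightarrow> w = - (x / y)"
  by (simp add: divide_dual_def dual_right_inverse mult.commute mult.left_commute)

lemma dinner_expand: "dinner A B = - (A$1 * B$1) + A$2 * B$2 + A$3 * B$3"
  by (rule dual_eqI) (simp_all add: dinner_def lor_def vre_def vdu_def algebra_simps)

lemma dinner_commute: "dinner A B = dinner B A"
  unfolding dinner_expand by (simp add: algebra_simps)

lemma dinner_add_left: "dinner (A + B) C = dinner A C + dinner B C"
  unfolding dinner_expand by (simp add: algebra_simps)

lemma dinner_diff_left: "dinner (A - B) C = dinner A C - dinner B C"
  unfolding dinner_expand by (simp add: algebra_simps)

lemma dinner_minus_left: "dinner (- A) B = - dinner A B"
  unfolding dinner_expand by (simp add: algebra_simps)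

lemma dinner_scale_left: "dinner (c *s A) B = c * dinner A B"
  unfolding dinner_expand by (simp add: algebra_simps)

lemmas dinner_left_linear =
  dinner_add_left dinner_diff_left dinner_minus_left dinner_scale_left

text \<open>The Lorentzian version of \<open>det X \<cdot> det Y = det (X Y\<^sup>T)\<close>: the metric has determinant \<open>-1\<close>.\<close>
lemma ddet_mult_ddet:
  "ddet X1 X2 X3 * ddet Y1 Y2 Y3 =
   - (dinner X1 Y1 * (dinner X2 Y2 * dinner X3 Y3 - dinner X2 Y3 * dinner X3 Y2)
    - dinner X1 Y2 * (dinner X2 Y1 * dinner X3 Y3 - dinner X2 Y3 * dinner X3 Y1)
    + dinner X1 Y3 * (dinner X2 Y1 * dinner X3 Y2 - dinner X2 Y2 * dinner X3 Y1))"
  unfolding ddet_def dinner_expand by (simp add: algebra_simps)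

definition timelike_orthonormal :: "dvec \<Rightarrow> dvec \<Rightarrow> dvec \<Rightarrow> bool" where
  "timelike_orthonormal E1 E2 E3 \<longleftrightarrow>
     dinner E1 E1 = -1 \<and> dinner E2 E2 = 1 \<and> dinner E3 E3 = 1 \<and>
     dinner E1 E2 = 0 \<and> dinner E1 E3 = 0 \<and> dinner E2 E3 = 0"

lemma timelike_orthonormal_ddet_square:
  "timelike_orthonormal E1 E2 E3 \<Longrightarrow> ddet E1 E2 E3 * ddet E1 E2 E3 = 1"
  unfolding ddet_mult_ddet timelike_orthonormal_def by (simp add: dinner_commute)

lemma dvec_eqI: "vre A = vre B \<Longrightarrow> vdu A = vdu B \<Longrightarrow> A = (B::dvec)"
  unfolding vre_def vdu_def vec_eq_iff by (auto intro: dual_eqI)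

lemma dvec_deriv_unique: "dvec_deriv X A t \<Longrightarrow> dvec_deriv X B t \<Longrightarrow> A = B"
  unfolding dvec_deriv_def by (metis dvec_eqI vector_derivative_unique_at)

lemma dvec_deriv_transform_open:
  "dvec_deriv X A t \<Longrightarrow> open I \<Longrightarrow> t \<in> I \<Longrightarrow> (\<And>u. u \<in> I \<Longrightarrow> X u = Y u)
    \<Longrightarrow> dvec_deriv Y A t"
  unfolding dvec_deriv_def by (metis has_vector_derivative_transform_within_open)

lemma dvec_deriv_add_scale:
  assumes "dvec_deriv X A t" "dvec_deriv Y C t"
  shows "dvec_deriv (\<lambda>u. X u + c *s Y u) (A + c *s C) t"
proof -
  have "vre (Z + c *s W) = vre Z + dre c *\<^sub>R vre W"
    and "vdu (Z + c *s W) = vdu Z + dre c *\<^sub>R vdu W + ddu c *\<^sub>R vre W" for Z W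
    by (simp_all add: vre_def vdu_def vec_eq_iff)
  with assms show ?thesis
    unfolding dvec_deriv_def by (auto intro!: derivative_eq_intros)
qed

lemma dual_timelike_frenetD:
  assumes "dual_timelike_frenet I \<alpha> s T N B \<kappa> \<tau>" "t \<in> I"
  obtains s' where "dre s' > 0" "dvec_deriv \<alpha> (s' *s T t) t"
    "timelike_orthonormal (T t) (N t) (B t)" "dvec_deriv B (- ((s' * \<tau> t) *s N t)) t"
proof -
  obtain \<alpha>' s' where d\<alpha>: "dvec_deriv \<alpha> \<alpha>' t" and "dtimelike \<alpha>'" "s' = dnorm_t \<alpha>'"
    and T: "T t = inverse s' *s \<alpha>'"
    and frame: "timelike_orthonormal (T t) (N t) (B t)"
    and dB: "dvec_deriv B (- ((s' * \<tau> t) *s N t)) t"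
    using assms unfolding dual_timelike_frenet_def timelike_orthonormal_def by blast
  then have pos: "dre s' > 0"
    by (simp add: dtimelike_def dnorm_t_def dsqrt_def)
  then have "\<alpha>' = s' *s T t"
    using T dual_right_inverse[of s'] by (simp add: vec_eq_iff mult.assoc[symmetric])
  then show ?thesis
    using that[OF pos _ frame dB] d\<alpha> by simp
qed

lemma dual_spacelike_frenetD:
  assumes "dual_spacelike_frenet I \<beta> s V1 V2 V3 P Q" "t \<in> I"
  obtains s' where "dre s' > 0" "dvec_deriv \<beta> (s' *s V1 t) t"
    "timelike_orthonormal (V3 t) (V1 t) (V2 t)"
    "dvec_deriv V2 (- ((s' * P t) *s V1 t) + (s' * Q t) *s V3 t) t"
proof -
  obtain \<beta>' s' where d\<beta>: "dvec_deriv \<beta> \<beta>' t" and "dspacelike \<beta>'" "s' = dnorm_s \<beta>'"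
    and V1: "V1 t = inverse s' *s \<beta>'"
    and frame: "timelike_orthonormal (V3 t) (V1 t) (V2 t)"
    and dV2: "dvec_deriv V2 (- ((s' * P t) *s V1 t) + (s' * Q t) *s V3 t) t"
    using assms unfolding dual_spacelike_frenet_def timelike_orthonormal_def
    by (auto simp: dinner_commute)
  then have pos: "dre s' > 0"
    by (simp add: dspacelike_def dnorm_s_def dsqrt_def)
  then have "\<beta>' = s' *s V1 t"
    using V1 dual_right_inverse[of s'] by (simp add: vec_eq_iff mult.assoc[symmetric])
  then show ?thesis
    using that[OF pos _ frame dV2] d\<beta> by simp
qed

lemma same_orientation_frames_coordinate:
  assumes TNB: "timelike_orthonormal T N B" and V: "timelike_orthonormal V3 V1 B"
    and V1: "V1 = a *s T - (a * c) *s N"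
    and orient: "ddet V1 B V3 = ddet T N B"
  shows "dinner V3 N = a" and "a * a * (c * c - 1) = 1"
proof -
  define x y where "x = dinner V3 T" and "y = dinner V3 N"
  have V1_inner: "dinner V1 X = a * dinner T X - a * c * dinner N X" for X
    unfolding V1 dinner_left_linear by simp
  have V1_T: "dinner V1 T = - a" and V1_N: "dinner V1 N = - (a * c)"
    and V1_B: "dinner V1 B = 0"
    using TNB V1_inner[of T] V1_inner[of N] V1_inner[of B]
    by (simp_all add: timelike_orthonormal_def dinner_commute)
  show unit: "a * a * (c * c - 1) = 1"
    using V V1_inner[of V1] V1_T V1_N
    by (simp add: timelike_orthonormal_def dinner_commute algebra_simps)
  have orth: "a * x - a * c * y = 0"
    using V V1_inner[of V3] by (simp add: timelike_orthonormal_def dinner_commute x_def y_def)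
  have "ddet V1 B V3 * ddet T N B = - (a * y - a * c * x)"
    unfolding ddet_mult_ddet using TNB V V1_T V1_N V1_B
    by (simp add: timelike_orthonormal_def dinner_commute x_def y_def algebra_simps)
  then have det: "a * y - a * c * x = -1"
    using orient timelike_orthonormal_ddet_square[OF TNB] by (metis minus_equation_iff)
  have "- a = a * (a * y - a * c * x) + a * c * (a * x - a * c * y)"
    unfolding det orth by simp
  also have "\<dots> = - y * (a * a * (c * c - 1))"
    by (simp add: algebra_simps)
  finally show "dinner V3 N = a"
    unfolding unit y_def by simp
qed

lemma mannheim_frame_curvature_torsion:
  assumes TNB: "timelike_orthonormal T N B" and V: "timelike_orthonormal V3 V1 B"
    and orient: "ddet V1 B V3 = ddet T N B"
    and s1: "dre s1 > 0" and s2: "dre s2 > 0"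
    and tangent: "s2 *s V1 = s1 *s T + lam *s (- ((s1 * \<tau>) *s N))"
    and binormal: "- ((s1 * \<tau>) *s N) = - ((s2 * P) *s V1) + (s2 * Q) *s V3"
  shows "P = - (lam * Q) * \<tau>" and "dre (lam * Q) \<noteq> 0"
proof -
  define a c where "a = s1 * inverse s2" and "c = lam * \<tau>"
  have "V1 = (inverse s2 * s2) *s V1"
    using dual_right_inverse[of s2] s2 by (simp add: mult.commute)
  also have "\<dots> = a *s T - (a * c) *s N"
    unfolding vector_smult_assoc[symmetric] tangent a_def c_def
    by (simp add: vec_eq_iff algebra_simps)
  finally have V1: "V1 = a *s T - (a * c) *s N" .
  have V3_N: "dinner V3 N = a" and unit: "a * a * (c * c - 1) = 1"
    using same_orientation_frames_coordinate[OF TNB V V1 orient] by blast+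
  have V1_N: "dinner V1 N = - (a * c)"
    using V1 TNB by (simp add: dinner_left_linear timelike_orthonormal_def)
  have P_eq: "s2 * P = - (s1 * \<tau> * (a * c))"
    using arg_cong[OF binormal, of "\<lambda>X. dinner X V1"] V1_N V
    by (simp add: dinner_left_linear timelike_orthonormal_def
        dinner_commute[of N V1] dinner_commute[of V3 V1])
  have Q_eq: "s2 * Q = s1 * \<tau> * a"
    using arg_cong[OF binormal, of "\<lambda>X. dinner X V3"] V3_N V
    by (simp add: dinner_left_linear timelike_orthonormal_def
        dinner_commute[of N V3] dinner_commute[of V1 V3])
  have "s2 * P = - (c * (s1 * \<tau> * a))"
    unfolding P_eq by (simp add: ac_simps)
  also have "\<dots> = s2 * (- (lam * Q) * \<tau>)"
    unfolding Q_eq[symmetric] c_def by (simp add: ac_simps)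
  finally show "P = - (lam * Q) * \<tau>"
    using s2 dual_mult_left_cancel by (metis less_irrefl)
  have real_unit: "(dre a)\<^sup>2 * ((dre c)\<^sup>2 - 1) = 1"
    using arg_cong[OF unit, of dre] by (simp add: power2_eq_square)
  then have "dre a \<noteq> 0" by auto
  moreover have "dre c \<noteq> 0"
  proof
    assume "dre c = 0"
    with real_unit have "(dre a)\<^sup>2 = -1" by simp
    then show False using zero_le_power2[of "dre a"] by linarith
  qed
  moreover have "dre s1 * dre \<tau> * dre a = dre s2 * dre Q"
    using arg_cong[OF Q_eq, of dre] by simp
  ultimately show "dre (lam * Q) \<noteq> 0"
    using s1 s2 by (auto simp: c_def)
qed

theorem theorem3p3:
  fixes I :: "real set"
    and \<alpha> \<beta> T N B V1 V2 V3 :: "real \<Rightarrow> dvec"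
    and s s\<^sub>2 \<kappa> \<tau> P Q :: "real \<Rightarrow> dual"
    and lam :: dual
  assumes "open I"
    and alpha: "dual_timelike_frenet I \<alpha> s T N B \<kappa> \<tau>"
    and beta: "dual_spacelike_frenet I \<beta> s\<^sub>2 V1 V2 V3 P Q"
    and lambda: "lam \<noteq> 0"
    and mannheim: "\<forall>t\<in>I. \<beta> t = \<alpha> t + lam *s B t"
    and lines: "\<forall>t\<in>I. V2 t = B t"
    and orient: "\<forall>t\<in>I. ddet (V1 t) (V2 t) (V3 t) = ddet (T t) (N t) (B t)"
  shows "\<forall>t\<in>I. \<tau> t = - (P t / (lam * Q t))"
proof
  fix t assume t: "t \<in> I"
  obtain s1 where s1: "dre s1 > 0" and d\<alpha>: "dvec_deriv \<alpha> (s1 *s T t) t"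
    and TNB: "timelike_orthonormal (T t) (N t) (B t)"
    and dB: "dvec_deriv B (- ((s1 * \<tau> t) *s N t)) t"
    using dual_timelike_frenetD[OF alpha t] .
  obtain s2 where s2: "dre s2 > 0" and d\<beta>: "dvec_deriv \<beta> (s2 *s V1 t) t"
    and V: "timelike_orthonormal (V3 t) (V1 t) (V2 t)"
    and dV2: "dvec_deriv V2 (- ((s2 * P t) *s V1 t) + (s2 * Q t) *s V3 t) t"
    using dual_spacelike_frenetD[OF beta t] .
  have "dvec_deriv \<beta> (s1 *s T t + lam *s (- ((s1 * \<tau> t) *s N t))) t"
    using dvec_deriv_transform_open[OF dvec_deriv_add_scale[OF d\<alpha> dB] \<open>open I\<close> t] mannheim
    by auto
  then have tangent: "s2 *s V1 t = s1 *s T t + lam *s (- ((s1 * \<tau> t) *s N t))"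
    using d\<beta> dvec_deriv_unique by blast
  have binormal: "- ((s1 * \<tau> t) *s N t) = - ((s2 * P t) *s V1 t) + (s2 * Q t) *s V3 t"
    using dvec_deriv_transform_open[OF dV2 \<open>open I\<close> t] lines dB dvec_deriv_unique by metis
  have "V2 t = B t" using lines t by blast
  then have "timelike_orthonormal (V3 t) (V1 t) (B t)"
    and "ddet (V1 t) (B t) (V3 t) = ddet (T t) (N t) (B t)"
    using V orient t by auto
  from mannheim_frame_curvature_torsion[OF TNB this s1 s2 tangent binormal]
  show "\<tau> t = - (P t / (lam * Q t))"
    by (intro dual_eq_minus_divideI)
qed

end
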